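(* Assume $V=W$ is a Hilbert space, $\mathcal{A}$ is coercive with constant $\alpha>0$ (i.e. $\alpha\|\phi\|_W^2\le\mathcal{A}(\phi,\phi)$ for all $\phi\in W$), and $W_\theta\cup S_\theta\subseteq V_\eta$. Let $\sigma^*:=\inf_{w'_\theta\in W_\theta}\|u-w'_\theta\|_{op,\eta}$. If $\varepsilon\ge0$ and $w_\theta\in W_\theta$ satisfy $\|u-w_\theta\|_{op,\eta}\le\sigma^*+\varepsilon$, then $$\|u-w_\theta\|_W\le\Big(1+\frac{4M}{\alpha}\Big)\inf_{w'_\theta\in W_\theta}\|u-w'_\theta\|_W+\frac{\varepsilon}{\alpha}.$$ In particular, for any minimizing sequence $(w^n_\theta)\subset W_\theta$ (i.e. $\|u-w^n_\theta\|_{op,\eta}\to\sigma^*$) and any $\varepsilon>0$ there is $k$ with $\|u-w^k_\theta\|_W\le(1+4M/\alpha)\inf_{w'_\theta\in W_\theta}\|u-w'_\theta\|_W+\varepsilon/\alpha$.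
   Context: $W=V$ is a separable real Hilbert space. $\mathcal{A}:W\times W\to\mathbb{R}$ is a bilinear form with $\mathcal{A}(w,v)\le M\|w\|_W\|v\|_W$, $\mathcal{F}:W\to\mathbb{R}$ is bounded linear, and $u\in W$ is the unique solution of $\mathcal{A}(u,v)=\mathcal{F}(v)$ for all $v\in W$. $W_\theta,V_\eta\subseteq W$ are arbitrary subsets, $V_\eta$ containing an element of nonzero norm. For $w\in W$, $\|w\|_{op,\eta}:=\sup_{v_\eta\in V_\eta,\ \|v_\eta\|_W\neq0}\mathcal{A}(w,v_\eta)/\|v_\eta\|_W$. $S_\theta:=\{w_1-w_2:\ w_1,w_2\in W_\theta\}$. *)

theory Defs
  imports "HOL-Analysis.Analysis"
begin

definition opnorm :: "('a::real_normed_vector \<Rightarrow> 'a \<Rightarrow> real) \<Rightarrow> 'a set \<Rightarrow> 'a \<Rightarrow> real" where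
  "opnorm A Veta w = (SUP v\<in>{v\<in>Veta. norm v \<noteq> 0}. A w v / norm v)"

end

theory Submission
  imports Defs
begin

text \<open>Take two approximants \<open>w, w' \<in> W\<^sub>\<theta>\<close>, where \<open>w\<close> is \<open>\<epsilon>\<close>-optimal for the residual
  norm \<open>\<parallel>u - \<cdot>\<parallel>\<^sub>o\<^sub>p\<^sub>,\<^sub>\<eta>\<close>. Their difference \<open>d = w' - w\<close> lies in \<open>V\<^sub>\<eta>\<close>, so it is an admissible
  test function, and coercivity gives
  \<open>\<alpha>\<parallel>d\<parallel>\<^sup>2 \<le> \<A>(d,d) = \<A>(u - w, d) - \<A>(u - w', d) \<le> (\<parallel>u - w\<parallel>\<^sub>o\<^sub>p\<^sub>,\<^sub>\<eta> + M\<parallel>u - w'\<parallel>)\<parallel>d\<parallel>\<close>.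
  Since \<open>\<parallel>u - w\<parallel>\<^sub>o\<^sub>p\<^sub>,\<^sub>\<eta> \<le> \<parallel>u - w'\<parallel>\<^sub>o\<^sub>p\<^sub>,\<^sub>\<eta> + \<epsilon> \<le> M\<parallel>u - w'\<parallel> + \<epsilon>\<close>, the triangle inequality yields
  \<open>\<parallel>u - w\<parallel> \<le> (1 + 2M/\<alpha>)\<parallel>u - w'\<parallel> + \<epsilon>/\<alpha>\<close>, a sharper constant than \<open>1 + 4M/\<alpha>\<close>.\<close>

lemma opnorm_le:
  assumes "\<And>v. A w v \<le> C * norm v" and "\<exists>v\<in>V. v \<noteq> 0"
  shows "opnorm A V w \<le> C"
  unfolding opnorm_def
proof (rule cSUP_least)
  show "{v \<in> V. norm v \<noteq> 0} \<noteq> {}" using assms(2) by auto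
next
  fix v assume "v \<in> {v \<in> V. norm v \<noteq> 0}"
  then show "A w v / norm v \<le> C" using assms(1)[of v] by (simp add: divide_le_eq)
qed

lemma form_le_opnorm:
  assumes "\<And>v. A w v \<le> C * norm v" and "v \<in> V" and "v \<noteq> 0"
  shows "A w v \<le> opnorm A V w * norm v"
proof -
  have "bdd_above ((\<lambda>v. A w v / norm v) ` {v \<in> V. norm v \<noteq> 0})"
    using assms(1) by (intro bdd_aboveI2[where M = C]) (simp add: divide_le_eq)
  then have "A w v / norm v \<le> opnorm A V w"
    unfolding opnorm_def using assms(2,3) by (intro cSUP_upper) auto
  then show ?thesis using assms(3) by (simp add: divide_le_eq)
qed

locale coercive_bounded_form =
  fixes A :: "'a::real_normed_vector \<Rightarrow> 'a \<Rightarrow> real" and M \<alpha> :: real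
  assumes bilinear: "bilinear A"
    and bounded: "\<And>w v. A w v \<le> M * norm w * norm v"
    and coercive: "\<And>\<phi>. \<alpha> * (norm \<phi>)\<^sup>2 \<le> A \<phi> \<phi>"
    and alpha_pos: "\<alpha> > 0"
begin

lemma bound_nonneg:
  fixes x :: 'a
  assumes "x \<noteq> 0"
  shows "M \<ge> 0"
proof -
  have "\<alpha> * norm x * norm x \<le> M * norm x * norm x"
    using coercive[of x] bounded[of x x] by (simp add: power2_eq_square mult.assoc)
  then have "\<alpha> \<le> M" using assms by simp
  then show ?thesis using alpha_pos by simp
qed

lemma coercive_difference_estimate:
  assumes "e - e' \<in> V" and "e \<noteq> e'"
  shows "\<alpha> * norm (e - e') \<le> opnorm A V e + M * norm e'"
proof -
  define d where "d = e - e'"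
  have "d \<noteq> 0" using assms(2) by (simp add: d_def)
  have "\<alpha> * norm d * norm d \<le> A d d"
    using coercive[of d] by (simp add: power2_eq_square mult.assoc)
  also have "\<dots> = A e d + A (- e') d"
    by (simp add: d_def bilinear_lsub[OF bilinear] bilinear_lneg[OF bilinear])
  also have "\<dots> \<le> opnorm A V e * norm d + M * norm e' * norm d"
  proof (rule add_mono)
    show "A e d \<le> opnorm A V e * norm d"
      using assms(1) \<open>d \<noteq> 0\<close> bounded[of e]
      by (intro form_le_opnorm[where C = "M * norm e"]) (auto simp: d_def mult.assoc)
    show "A (- e') d \<le> M * norm e' * norm d"
      using bounded[of "- e'" d] by simp
  qed
  finally have "(\<alpha> * norm d) * norm d \<le> (opnorm A V e + M * norm e') * norm d"
    by (simp add: algebra_simps)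
  then show ?thesis using \<open>d \<noteq> 0\<close> by (simp add: d_def)
qed

text \<open>\<open>opnorm\<close> may be negative (\<open>V\<close> need not be symmetric), and \<open>Inf\<close> of a real set that is
  unbounded below is junk, so this bound is what makes the infimum over \<open>W\<close> usable.\<close>

lemma bdd_below_opnorm_residuals:
  assumes "{w1 - w2 | w1 w2. w1 \<in> W \<and> w2 \<in> W} \<subseteq> V"
  shows "bdd_below ((\<lambda>w. opnorm A V (u - w)) ` W)"
proof (cases "W = {}")
  case False
  then obtain w0 where "w0 \<in> W" by blast
  show ?thesis
  proof (rule bdd_belowI2)
    fix w assume "w \<in> W"
    show "min (opnorm A V (u - w0)) (- M * norm (u - w0)) \<le> opnorm A V (u - w)"
    proof (cases "w = w0")
      case False
      have "(u - w) - (u - w0) \<in> V"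
        using assms \<open>w \<in> W\<close> \<open>w0 \<in> W\<close> by force
      then have "\<alpha> * norm ((u - w) - (u - w0)) \<le> opnorm A V (u - w) + M * norm (u - w0)"
        using False by (intro coercive_difference_estimate) auto
      moreover have "0 \<le> \<alpha> * norm ((u - w) - (u - w0))" using alpha_pos by simp
      ultimately show ?thesis by linarith
    qed simp
  qed
qed simp

lemma quasi_optimal_pair:
  assumes diff: "w' - w \<in> V" and V_nz: "\<exists>v\<in>V. v \<noteq> 0" and "\<epsilon> \<ge> 0"
    and near_opt: "opnorm A V (u - w) \<le> opnorm A V (u - w') + \<epsilon>"
  shows "norm (u - w) \<le> (1 + 2 * M / \<alpha>) * norm (u - w') + \<epsilon> / \<alpha>"
proof -
  have "M \<ge> 0" using V_nz bound_nonneg by blast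
  have residual: "opnorm A V (u - w) \<le> M * norm (u - w') + \<epsilon>"
    using near_opt opnorm_le[OF _ V_nz, of A "u - w'" "M * norm (u - w')"] bounded
    by (simp add: mult.assoc)
  have "\<alpha> * norm (w' - w) \<le> 2 * M * norm (u - w') + \<epsilon>"
  proof (cases "w = w'")
    case False
    have "\<alpha> * norm ((u - w) - (u - w')) \<le> opnorm A V (u - w) + M * norm (u - w')"
      using diff False by (intro coercive_difference_estimate) auto
    then show ?thesis using residual by simp
  qed (use \<open>M \<ge> 0\<close> \<open>\<epsilon> \<ge> 0\<close> in simp)
  then have "norm (w' - w) \<le> (2 * M * norm (u - w') + \<epsilon>) / \<alpha>"
    using alpha_pos by (simp add: le_divide_eq mult.commute)
  moreover have "norm (u - w) \<le> norm (u - w') + norm (w' - w)"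
    using norm_triangle_ineq[of "u - w'" "w' - w"] by simp
  ultimately have "norm (u - w) \<le> norm (u - w') + (2 * M * norm (u - w') + \<epsilon>) / \<alpha>"
    by linarith
  also have "\<dots> = (1 + 2 * M / \<alpha>) * norm (u - w') + \<epsilon> / \<alpha>"
    using alpha_pos by (simp add: field_simps)
  finally show ?thesis .
qed

lemma quasi_optimal:
  assumes diffs: "{w1 - w2 | w1 w2. w1 \<in> W \<and> w2 \<in> W} \<subseteq> V"
    and V_nz: "\<exists>v\<in>V. v \<noteq> 0" and "\<epsilon> \<ge> 0" and "w \<in> W"
    and near_opt: "opnorm A V (u - w) \<le> (INF w'\<in>W. opnorm A V (u - w')) + \<epsilon>"
  shows "norm (u - w) \<le> (1 + 2 * M / \<alpha>) * (INF w'\<in>W. norm (u - w')) + \<epsilon> / \<alpha>"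
proof -
  have c_pos: "1 + 2 * M / \<alpha> > 0"
    using V_nz bound_nonneg alpha_pos by (smt (verit) divide_nonneg_pos)
  have "(norm (u - w) - \<epsilon> / \<alpha>) / (1 + 2 * M / \<alpha>) \<le> (INF w'\<in>W. norm (u - w'))"
  proof (rule cINF_greatest)
    show "W \<noteq> {}" using \<open>w \<in> W\<close> by blast
  next
    fix w' assume "w' \<in> W"
    have "opnorm A V (u - w) \<le> opnorm A V (u - w') + \<epsilon>"
      using near_opt cINF_lower[OF bdd_below_opnorm_residuals[where u = u, OF diffs] \<open>w' \<in> W\<close>] by linarith
    moreover have "w' - w \<in> V" using diffs \<open>w \<in> W\<close> \<open>w' \<in> W\<close> by blast
    ultimately have "norm (u - w) \<le> (1 + 2 * M / \<alpha>) * norm (u - w') + \<epsilon> / \<alpha>"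
      using quasi_optimal_pair V_nz \<open>\<epsilon> \<ge> 0\<close> by blast
    then show "(norm (u - w) - \<epsilon> / \<alpha>) / (1 + 2 * M / \<alpha>) \<le> norm (u - w')"
      using c_pos by (simp add: divide_le_eq mult.commute)
  qed
  then show ?thesis using c_pos by (simp add: divide_le_eq mult.commute)
qed

end

theorem mainTheorem3:
  fixes A :: "'a::{real_inner, complete_space} \<Rightarrow> 'a \<Rightarrow> real"
    and F :: "'a \<Rightarrow> real"
    and u :: 'a and M \<alpha> :: real
    and Wtheta Veta :: "'a set"
  assumes separable: "\<exists>D::'a set. countable D \<and> closure D = UNIV"
    and bilin: "bilinear A"
    and bounded: "\<And>w v. A w v \<le> M * norm w * norm v"
    and F_lin: "bounded_linear F"
    and u_sol: "\<And>v. A u v = F v"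
    and u_unique: "\<And>u'. (\<forall>v. A u' v = F v) \<Longrightarrow> u' = u"
    and Veta_nz: "\<exists>v\<in>Veta. norm v \<noteq> 0"
    and alpha_pos: "\<alpha> > 0"
    and coercive: "\<And>\<phi>. \<alpha> * (norm \<phi>)^2 \<le> A \<phi> \<phi>"
    and incl: "Wtheta \<union> {w1 - w2 | w1 w2. w1 \<in> Wtheta \<and> w2 \<in> Wtheta} \<subseteq> Veta"
  shows "(\<forall>\<epsilon> wt. \<epsilon> \<ge> 0 \<and> wt \<in> Wtheta \<and>
            opnorm A Veta (u - wt) \<le> (INF w'\<in>Wtheta. opnorm A Veta (u - w')) + \<epsilon> \<longrightarrow>
            norm (u - wt) \<le> (1 + 4 * M / \<alpha>) * (INF w'\<in>Wtheta. norm (u - w')) + \<epsilon> / \<alpha>)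
       \<and> (\<forall>(wn :: nat \<Rightarrow> 'a) \<epsilon>. (\<forall>n. wn n \<in> Wtheta) \<and>
            (\<lambda>n. opnorm A Veta (u - wn n)) \<longlonglongrightarrow> (INF w'\<in>Wtheta. opnorm A Veta (u - w')) \<and>
            \<epsilon> > 0 \<longrightarrow>
            (\<exists>k. norm (u - wn k) \<le> (1 + 4 * M / \<alpha>) * (INF w'\<in>Wtheta. norm (u - w')) + \<epsilon> / \<alpha>))"
proof -
  interpret coercive_bounded_form A M \<alpha>
    using bilin bounded coercive alpha_pos by unfold_locales
  have V_nz: "\<exists>v\<in>Veta. v \<noteq> 0" using Veta_nz by auto
  have diffs: "{w1 - w2 | w1 w2. w1 \<in> Wtheta \<and> w2 \<in> Wtheta} \<subseteq> Veta" using incl by blast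
  have "M \<ge> 0" using V_nz bound_nonneg by blast
  have near_opt: "norm (u - wt) \<le> (1 + 4 * M / \<alpha>) * (INF w'\<in>Wtheta. norm (u - w')) + \<epsilon> / \<alpha>"
    if "\<epsilon> \<ge> 0" "wt \<in> Wtheta"
      "opnorm A Veta (u - wt) \<le> (INF w'\<in>Wtheta. opnorm A Veta (u - w')) + \<epsilon>" for \<epsilon> wt
  proof -
    have "0 \<le> (INF w'\<in>Wtheta. norm (u - w'))"
      using \<open>wt \<in> Wtheta\<close> by (intro cINF_greatest) auto
    then have "(1 + 2 * M / \<alpha>) * (INF w'\<in>Wtheta. norm (u - w'))
        \<le> (1 + 4 * M / \<alpha>) * (INF w'\<in>Wtheta. norm (u - w'))"
      using \<open>M \<ge> 0\<close> alpha_pos by (intro mult_right_mono) (auto simp: divide_right_mono)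
    then show ?thesis using quasi_optimal[OF diffs V_nz that] by linarith
  qed
  have "\<exists>k. opnorm A Veta (u - wn k) \<le> (INF w'\<in>Wtheta. opnorm A Veta (u - w')) + \<epsilon>"
    if "(\<lambda>n. opnorm A Veta (u - wn n)) \<longlonglongrightarrow> (INF w'\<in>Wtheta. opnorm A Veta (u - w'))" "\<epsilon> > 0"
    for wn :: "nat \<Rightarrow> 'a" and \<epsilon>
    using eventually_sequentially order_tendstoD(2)[OF that(1), of "_ + \<epsilon>"] that(2)
    by (metis less_add_same_cancel1 less_imp_le order_refl)
  then show ?thesis using near_opt by (meson less_imp_le)
qed

end
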